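(* With notation as in the context, fix any $j_0\in\Omega_2\setminus\{1\}$ and $t_0\in\Omega_1\setminus\{1\}$, and define elements $A_{i,k}\in\mathcal{U}(\mathcal{J}_{\mathbb{F}})$ for $i,k\in\Omega_1\cup\Omega_3$ by: $A_{i,k}=G_{i,1}G_{k,1}$ for $i,k\in\Omega_1$, $i\neq k$; $A_{1,p+1}=G_{1,j_0}G_{1,j_0}G_{1,1}$; $A_{i,k}=G_{i,1}G_{1,1}G_{1,k-p}$ for $i\in\Omega_1$, $k\in\Omega_3$, $(i,k)\neq(1,p+1)$; $A_{i,k}=-A_{k,i}+G_{k,i-p}$ for $i\in\Omega_3$, $k\in\Omega_1$; $A_{i,k}=G_{1,i-p}G_{1,k-p}$ for $i,k\in\Omega_3$, $i\neq k$; $A_{1,1}=G_{1,1}G_{1,1}G_{1,j_0}G_{1,j_0}$; $A_{i,i}=-G_{1,1}G_{1,1}G_{t_0,1}G_{t_0,1}+G_{i,1}G_{i,1}$ for $i\in\Omega_1\setminus\{1\}$; $A_{i,i}=-G_{1,1}G_{1,1}G_{1,j_0}G_{1,j_0}+G_{1,i-p}G_{1,i-p}$ for $i\in\Omega_3$. Then these elements do not depend on the choices of $j_0,t_0$, they satisfy $A_{i,k}A_{\ell,t}=\delta_{k,\ell}A_{i,t}$ for all $i,k,\ell,t\in\Omega_1\cup\Omega_3$, and $G_{i,j}=A_{i,j+p}+A_{j+p,i}$ for all $i\in\Omega_1$, $j\in\Omega_2$.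
   Context: Let $\mathbb{F}$ be a field of characteristic $0$ and $p,q>1$ integers with $p\neq q$. Let $\mathcal{J}_{\mathbb{F}}$ be the vector space $M_{p\times q}(\mathbb{F})$ of $p\times q$ matrices with the Jordan triple product $\{x,y,z\}=xy^tz+zy^tx$ ($y^t$ the transpose). Put $\Omega_1=\{1,\dots,p\}$, $\Omega_2=\{1,\dots,q\}$, $\Omega_3=\{p+1,\dots,p+q\}$, and let $E_{i,j}$ ($i\in\Omega_1$, $j\in\Omega_2$) be the standard matrix units of $M_{p\times q}(\mathbb{F})$. Let $\mathfrak{F}$ be the free associative algebra (without identity element) over $\mathbb{F}$ on symbols $G_{i,j}$ ($i\in\Omega_1$, $j\in\Omega_2$), and let $\Phi:\mathcal{J}_{\mathbb{F}}\to\mathfrak{F}$ be the linear map with $\Phi(E_{i,j})=G_{i,j}$. Let $I$ be the two-sided ideal of $\mathfrak{F}$ generated by all elements $G_{i,j}G_{k,\ell}G_{s,t}+G_{s,t}G_{k,\ell}G_{i,j}-\Phi(\{E_{i,j},E_{k,\ell},E_{s,t}\})$ ($i,k,s\in\Omega_1$; $j,\ell,t\in\Omega_2$). The universal associative envelope is $\mathcal{U}(\mathcal{J}_{\mathbb{F}})=\mathfrak{F}/I$; the image of $G_{i,j}$ in it is again denoted $G_{i,j}$. $\delta_{k,\ell}$ is the Kronecker delta. *)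

theory Defs
  imports Main
begin

definition Om1 :: "nat \<Rightarrow> nat set" where "Om1 p = {1..p}"
definition Om2 :: "nat \<Rightarrow> nat set" where "Om2 q = {1..q}"
definition Om3 :: "nat \<Rightarrow> nat \<Rightarrow> nat set" where "Om3 p q = {p+1..p+q}"

text \<open>Elements of the free associative algebra (without identity) on symbols G(i,j):
  coefficient functions on words (lists of symbols).\<close>
type_synonym 'a fa = "(nat \<times> nat) list \<Rightarrow> 'a"

definition FA :: "nat \<Rightarrow> nat \<Rightarrow> ('a::field) fa set" where
  "FA p q = {f. finite {w. f w \<noteq> 0} \<and> f [] = 0 \<and>
                 (\<forall>w. f w \<noteq> 0 \<longrightarrow> set w \<subseteq> Om1 p \<times> Om2 q)}"

definition fa_zero :: "('a::field) fa" where "fa_zero = (\<lambda>w. 0)"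
definition fa_add :: "('a::field) fa \<Rightarrow> 'a fa \<Rightarrow> 'a fa" where
  "fa_add f g = (\<lambda>w. f w + g w)"
definition fa_neg :: "('a::field) fa \<Rightarrow> 'a fa" where
  "fa_neg f = (\<lambda>w. - f w)"
definition fa_sub :: "('a::field) fa \<Rightarrow> 'a fa \<Rightarrow> 'a fa" where
  "fa_sub f g = (\<lambda>w. f w - g w)"
definition fa_smult :: "'a::field \<Rightarrow> 'a fa \<Rightarrow> 'a fa" where
  "fa_smult c f = (\<lambda>w. c * f w)"
definition fa_mult :: "('a::field) fa \<Rightarrow> 'a fa \<Rightarrow> 'a fa" where
  "fa_mult f g = (\<lambda>w. \<Sum>k\<in>{0..length w}. f (take k w) * g (drop k w))"

definition Gen :: "nat \<Rightarrow> nat \<Rightarrow> ('a::field) fa" where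
  "Gen i j = (\<lambda>w. if w = [(i,j)] then 1 else 0)"

definition Emat :: "nat \<Rightarrow> nat \<Rightarrow> nat \<Rightarrow> nat \<Rightarrow> 'a::field" where
  "Emat i j = (\<lambda>a b. if a = i \<and> b = j then 1 else 0)"

definition jtp :: "nat \<Rightarrow> nat \<Rightarrow> (nat \<Rightarrow> nat \<Rightarrow> 'a::field) \<Rightarrow> (nat \<Rightarrow> nat \<Rightarrow> 'a)
    \<Rightarrow> (nat \<Rightarrow> nat \<Rightarrow> 'a) \<Rightarrow> (nat \<Rightarrow> nat \<Rightarrow> 'a)" where
  "jtp p q x y z = (\<lambda>a b. \<Sum>c\<in>Om2 q. \<Sum>d\<in>Om1 p.
      x a c * y d c * z d b + z a c * y d c * x d b)"

definition Phi :: "nat \<Rightarrow> nat \<Rightarrow> (nat \<Rightarrow> nat \<Rightarrow> 'a::field) \<Rightarrow> 'a fa" where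
  "Phi p q M = (\<lambda>w. \<Sum>i\<in>Om1 p. \<Sum>j\<in>Om2 q. M i j * Gen i j w)"

definition rel :: "nat \<Rightarrow> nat \<Rightarrow> nat \<Rightarrow> nat \<Rightarrow> nat \<Rightarrow> nat \<Rightarrow> nat \<Rightarrow> nat \<Rightarrow> ('a::field) fa" where
  "rel p q i j k l s t =
     fa_sub (fa_add (fa_mult (fa_mult (Gen i j) (Gen k l)) (Gen s t))
                    (fa_mult (fa_mult (Gen s t) (Gen k l)) (Gen i j)))
            (Phi p q (jtp p q (Emat i j) (Emat k l) (Emat s t)))"

inductive_set Ideal :: "nat \<Rightarrow> nat \<Rightarrow> ('a::field) fa set" for p q :: nat where
  gen: "\<lbrakk>i \<in> Om1 p; k \<in> Om1 p; s \<in> Om1 p; j \<in> Om2 q; l \<in> Om2 q; t \<in> Om2 q\<rbrakk>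
          \<Longrightarrow> rel p q i j k l s t \<in> Ideal p q"
| zero: "fa_zero \<in> Ideal p q"
| add: "\<lbrakk>x \<in> Ideal p q; y \<in> Ideal p q\<rbrakk> \<Longrightarrow> fa_add x y \<in> Ideal p q"
| smult: "x \<in> Ideal p q \<Longrightarrow> fa_smult c x \<in> Ideal p q"
| lmult: "\<lbrakk>a \<in> FA p q; x \<in> Ideal p q\<rbrakk> \<Longrightarrow> fa_mult a x \<in> Ideal p q"
| rmult: "\<lbrakk>a \<in> FA p q; x \<in> Ideal p q\<rbrakk> \<Longrightarrow> fa_mult x a \<in> Ideal p q"

text \<open>Equality of images in U(J) = F / I.\<close>
definition ueq :: "nat \<Rightarrow> nat \<Rightarrow> ('a::field) fa \<Rightarrow> 'a fa \<Rightarrow> bool" where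
  "ueq p q x y \<longleftrightarrow> fa_sub x y \<in> Ideal p q"

abbreviation m3 :: "('a::field) fa \<Rightarrow> 'a fa \<Rightarrow> 'a fa \<Rightarrow> 'a fa" where
  "m3 a b c \<equiv> fa_mult (fa_mult a b) c"
abbreviation m4 :: "('a::field) fa \<Rightarrow> 'a fa \<Rightarrow> 'a fa \<Rightarrow> 'a fa \<Rightarrow> 'a fa" where
  "m4 a b c d \<equiv> fa_mult (fa_mult (fa_mult a b) c) d"

definition A13 :: "nat \<Rightarrow> nat \<Rightarrow> nat \<Rightarrow> nat \<Rightarrow> ('a::field) fa" where
  "A13 p j0 i k =
     (if i = 1 \<and> k = p + 1 then m3 (Gen 1 j0) (Gen 1 j0) (Gen 1 1)
      else m3 (Gen i 1) (Gen 1 1) (Gen 1 (k - p)))"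

definition Aelt :: "nat \<Rightarrow> nat \<Rightarrow> nat \<Rightarrow> nat \<Rightarrow> nat \<Rightarrow> nat \<Rightarrow> ('a::field) fa" where
  "Aelt p q j0 t0 i k =
    (if i \<in> Om1 p \<and> k \<in> Om1 p then
       (if i \<noteq> k then fa_mult (Gen i 1) (Gen k 1)
        else if i = 1 then m4 (Gen 1 1) (Gen 1 1) (Gen 1 j0) (Gen 1 j0)
        else fa_add (fa_neg (m4 (Gen 1 1) (Gen 1 1) (Gen t0 1) (Gen t0 1)))
                    (fa_mult (Gen i 1) (Gen i 1)))
     else if i \<in> Om1 p \<and> k \<in> Om3 p q then A13 p j0 i k
     else if i \<in> Om3 p q \<and> k \<in> Om1 p then
       fa_add (fa_neg (A13 p j0 k i)) (Gen k (i - p))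
     else if i \<in> Om3 p q \<and> k \<in> Om3 p q then
       (if i \<noteq> k then fa_mult (Gen 1 (i - p)) (Gen 1 (k - p))
        else fa_add (fa_neg (m4 (Gen 1 1) (Gen 1 1) (Gen 1 j0) (Gen 1 j0)))
                    (fa_mult (Gen 1 (i - p)) (Gen 1 (i - p))))
     else fa_zero)"

end

theory Submission
  imports Defs
begin

text \<open>Work in any ring containing elements \<open>g i j\<close> that satisfy the defining relations of
  \<open>\<U>(\<J>)\<close> and in which \<open>x + x = 0\<close> forces \<open>x = 0\<close> (this is where characteristic 0 is used).
  The relations force \<open>g i j * g k l = 0\<close> for \<open>i \<noteq> k, j \<noteq> l\<close>, and make products
  \<open>g i j * g k j\<close>, \<open>g i j * g i l\<close>, \<open>g i j * g k j * g k t\<close> independent of the intermediate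
  indices. This yields well-defined elements \<open>e a b\<close> (\<open>a, b \<in> \<Omega>\<^sub>1 \<union> \<Omega>\<^sub>3\<close>), each a
  product of generators, and right multiplication by \<open>g i j\<close> acts on them as
  \<open>E(i, j+p) + E(j+p, i)\<close> acts on matrix units. Writing \<open>e c d\<close> as a product of generators
  then gives \<open>e a b * e c d = \<delta> b c * e a d\<close>, and each \<open>A i k\<close>, whatever \<open>j\<^sub>0, t\<^sub>0\<close>, equals
  \<open>e i k\<close>; \<open>G i j = A(i, j+p) + A(j+p, i)\<close> holds by the very definition of \<open>A(j+p, i)\<close>.\<close>

section \<open>Consequences of the triple relations in a ring\<close>

definition other :: "nat \<Rightarrow> nat" where
  "other t = (if t = 1 then 2 else 1)"

lemma other_neq [simp]: "other t \<noteq> t" "t \<noteq> other t"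
  by (auto simp: other_def)

lemma other_bounds [simp]: "Suc 0 \<le> other t" "2 \<le> n \<Longrightarrow> other t \<le> n"
  by (auto simp: other_def)

definition transpose_gens :: "(nat \<Rightarrow> nat \<Rightarrow> 'r) \<Rightarrow> nat \<Rightarrow> nat \<Rightarrow> 'r" where
  "transpose_gens g = (\<lambda>a b. g b a)"

lemma transpose_gens_apply [simp]: "transpose_gens g a b = g b a"
  by (simp add: transpose_gens_def)

lemma transpose_gens_transpose_gens [simp]: "transpose_gens (transpose_gens g) = g"
  by (simp add: transpose_gens_def)

text \<open>Candidates for the matrix units \<open>e a b\<close> (\<open>a \<noteq> b\<close>), \<open>e i (t+p)\<close> and \<open>e i i\<close>
  (\<open>a, b, i \<in> \<Omega>\<^sub>1\<close>), with the auxiliary column \<open>1\<close> and the auxiliary row \<open>other i\<close>.\<close>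
definition unit_off :: "(nat \<Rightarrow> nat \<Rightarrow> 'r::ring) \<Rightarrow> nat \<Rightarrow> nat \<Rightarrow> 'r" where
  "unit_off g a b = g a 1 * g b 1"

definition unit_cross :: "(nat \<Rightarrow> nat \<Rightarrow> 'r::ring) \<Rightarrow> nat \<Rightarrow> nat \<Rightarrow> 'r" where
  "unit_cross g i t = g i 1 * g (other i) 1 * g (other i) t"

definition unit_diag :: "(nat \<Rightarrow> nat \<Rightarrow> 'r::ring) \<Rightarrow> nat \<Rightarrow> 'r" where
  "unit_diag g i = unit_off g i (other i) * unit_off g (other i) i"

locale triple_gens =
  fixes p q :: nat and g :: "nat \<Rightarrow> nat \<Rightarrow> 'r::ring"
  assumes dims: "2 \<le> p" "2 \<le> q"
    and triple: "\<And>i j k l s t. i \<in> {1..p} \<Longrightarrow> k \<in> {1..p} \<Longrightarrow> s \<in> {1..p} \<Longrightarrow>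
      j \<in> {1..q} \<Longrightarrow> l \<in> {1..q} \<Longrightarrow> t \<in> {1..q} \<Longrightarrow>
      g i j * g k l * g s t + g s t * g k l * g i j =
        (if j = l \<and> k = s then g i t else 0) + (if t = l \<and> k = i then g s j else 0)"
    and two_torsion_free: "\<And>x::'r. x + x = 0 \<Longrightarrow> x = 0"
begin

lemma triple_gens_transpose: "triple_gens q p (transpose_gens g)"
proof
  show "2 \<le> q" "2 \<le> p" by (fact dims(2), fact dims(1))
  show "x + x = 0 \<Longrightarrow> x = 0" for x :: 'r by (rule two_torsion_free)
  fix i j k l s t
  assume "i \<in> {1..q}" "k \<in> {1..q}" "s \<in> {1..q}" "j \<in> {1..p}" "l \<in> {1..p}" "t \<in> {1..p}"
  moreover have "(j = l \<and> k = s) = (s = k \<and> l = j)" "(t = l \<and> k = i) = (i = k \<and> l = t)"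
    by auto
  ultimately show "transpose_gens g i j * transpose_gens g k l * transpose_gens g s t
      + transpose_gens g s t * transpose_gens g k l * transpose_gens g i j =
    (if j = l \<and> k = s then transpose_gens g i t else 0)
      + (if t = l \<and> k = i then transpose_gens g s j else 0)"
    using triple[of j l t i k s] by (simp only: transpose_gens_apply add.commute)
qed

lemma double_cancel: "x + x = y + y \<Longrightarrow> x = (y::'r)"
  using two_torsion_free[of "x - y"] by (simp add: algebra_simps)

lemma gen_sandwich:
  assumes "i \<in> {1..p}" "k \<in> {1..p}" "j \<in> {1..q}" "l \<in> {1..q}"
  shows "g i j * g k l * g i j = (if i = k \<and> j = l then g i j else 0)"
  by (rule double_cancel) (use triple[OF assms(1,2,1,3,4,3)] in auto)

lemma gen_cube: "i \<in> {1..p} \<Longrightarrow> j \<in> {1..q} \<Longrightarrow> g i j * g i j * g i j = g i j"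
  using gen_sandwich[of i i j j] by simp

lemma gen_square_anticomm:
  assumes "i \<in> {1..p}" "k \<in> {1..p}" "j \<in> {1..q}" "l \<in> {1..q}"
  shows "g i j * g i j * g k l + g k l * g i j * g i j
    = (if i = k then g i l else 0) + (if j = l then g k j else 0)"
  using triple[OF assms(1,1,2,3,3,4)] by (auto simp: mult.assoc)

lemma gen_mult_gen_eq_0:
  assumes "i \<in> {1..p}" "k \<in> {1..p}" "j \<in> {1..q}" "l \<in> {1..q}" "i \<noteq> k" "j \<noteq> l"
  shows "g i j * g k l = 0"
proof -
  have anti: "g i j * g i j * g k l = - (g k l * g i j * g i j)"
    using gen_square_anticomm[OF assms(1-4)] assms(5,6) by (simp add: eq_neg_iff_add_eq_0)
  have "g i j * g k l = (g i j * g i j * g i j) * g k l" using gen_cube[OF assms(1,3)] by simp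
  also have "\<dots> = g i j * (g i j * g i j * g k l)" by (simp add: mult.assoc)
  also have "\<dots> = - ((g i j * g k l * g i j) * g i j)" by (subst anti) (simp add: mult.assoc)
  also have "\<dots> = 0" using gen_sandwich[OF assms(1-4)] assms(5,6) by simp
  finally show ?thesis .
qed

lemma gen_mult_gen_same_col:
  assumes "i \<in> {1..p}" "k \<in> {1..p}" "j \<in> {1..q}" "l \<in> {1..q}" "i \<noteq> k"
  shows "g i j * g k j = g i l * g k l"
proof (cases "j = l")
  case False
  have rel: "g i j * g k j * g k l + g k l * g k j * g i j = g i l"
    using triple[OF assms(1,2,2,3,3,4)] assms(5) by auto
  have zero: "g i j * g k l = 0" using gen_mult_gen_eq_0 assms False by blast
  have anti: "g k j * g k l * g k l = g k j - g k l * g k l * g k j"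
  proof -
    have "g k l * g k l * g k j + g k j * g k l * g k l = g k j"
      using gen_square_anticomm[OF assms(2,2,4,3)] False by simp
    then show ?thesis by (simp add: eq_diff_eq add.commute)
  qed
  have "g i l * g k l = g i j * g k j * (g k l * g k l) + g k l * g k j * (g i j * g k l)"
    by (simp flip: rel add: algebra_simps)
  also have "\<dots> = g i j * (g k j * g k l * g k l)" by (simp add: zero mult.assoc)
  also have "\<dots> = g i j * g k j - (g i j * g k l) * g k l * g k j"
    unfolding anti by (simp add: right_diff_distrib mult.assoc)
  finally show ?thesis using zero by simp
qed simp

lemma gen_mult_gen_same_row:
  assumes "i \<in> {1..p}" "k \<in> {1..p}" "j \<in> {1..q}" "l \<in> {1..q}" "j \<noteq> l"
  shows "g i j * g i l = g k j * g k l"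
  using triple_gens.gen_mult_gen_same_col[OF triple_gens_transpose assms(3,4,1,2,5)] by simp

lemma gen_chain_eq_unit_cross_of_neq:
  assumes "i \<in> {1..p}" "k \<in> {1..p}" "j \<in> {1..q}" "t \<in> {1..q}" "i \<noteq> k"
  shows "g i j * g k j * g k t = unit_cross g i t"
proof -
  have o: "other t \<in> {1..q}" "other i \<in> {1..p}" using dims by auto
  have "g i j * g k j * g k t = g i (other t) * (g k (other t) * g k t)"
    using gen_mult_gen_same_col[OF assms(1,2,3) o(1) assms(5)] by (simp add: mult.assoc)
  also have "\<dots> = (g i (other t) * g (other i) (other t)) * g (other i) t"
    using gen_mult_gen_same_row[OF assms(2) o(2) o(1) assms(4)] by (simp add: mult.assoc)
  also have "\<dots> = g i 1 * g (other i) 1 * g (other i) t"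
    using gen_mult_gen_same_col[OF assms(1) o(2) o(1), of 1] dims by simp
  finally show ?thesis by (simp add: unit_cross_def)
qed

text \<open>The excluded path is \<open>g i t * g i t * g i t\<close>, which is \<open>g i t\<close> itself.\<close>
lemma gen_chain_eq_unit_cross:
  assumes "i \<in> {1..p}" "k \<in> {1..p}" "j \<in> {1..q}" "t \<in> {1..q}" "\<not> (i = k \<and> j = t)"
  shows "g i j * g k j * g k t = unit_cross g i t"
proof (cases "i = k")
  case True
  have o: "other i \<in> {1..p}" using dims by auto
  have "g i j * g k j * g k t = g i j * (g (other i) j * g (other i) t)"
    using gen_mult_gen_same_row[OF assms(1) o assms(3,4)] assms(5) True by (simp add: mult.assoc)
  also have "\<dots> = unit_cross g i t"
    using gen_chain_eq_unit_cross_of_neq[OF assms(1) o assms(3,4)] by (simp add: mult.assoc)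
  finally show ?thesis .
qed (use gen_chain_eq_unit_cross_of_neq assms in blast)

lemma gen_chain_eq_unit_cross_transpose:
  assumes "i \<in> {1..p}" "k \<in> {1..p}" "l \<in> {1..q}" "t \<in> {1..q}" "\<not> (t = l \<and> k = i)"
  shows "g k t * g k l * g i l = unit_cross (transpose_gens g) t i"
  using triple_gens.gen_chain_eq_unit_cross[OF triple_gens_transpose assms(4,3,2,1)] assms(5)
  by auto

lemma gen_mult_gen_eq_unit_off:
  "i \<in> {1..p} \<Longrightarrow> k \<in> {1..p} \<Longrightarrow> j \<in> {1..q} \<Longrightarrow> i \<noteq> k \<Longrightarrow> g i j * g k j = unit_off g i k"
  unfolding unit_off_def using dims by (intro gen_mult_gen_same_col) auto

lemma unit_cross_mult_gen_self:
  assumes "i \<in> {1..p}" "j \<in> {1..q}"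
  shows "unit_cross g i j * g i j = unit_diag g i"
proof -
  have o: "other j \<in> {1..q}" "other i \<in> {1..p}" using dims by auto
  have "unit_cross g i j = g i (other j) * g (other i) (other j) * g (other i) j"
    by (rule gen_chain_eq_unit_cross[symmetric]) (use assms o in auto)
  then have "unit_cross g i j * g i j
      = (g i (other j) * g (other i) (other j)) * (g (other i) j * g i j)"
    by (simp add: mult.assoc)
  also have "\<dots> = unit_off g i (other i) * unit_off g (other i) i"
    using gen_mult_gen_eq_unit_off[OF assms(1) o(2) o(1)]
      gen_mult_gen_eq_unit_off[OF o(2) assms(1) assms(2)] by simp
  finally show ?thesis by (simp add: unit_diag_def)
qed

lemma gen_eq_unit_cross_add:
  assumes "i \<in> {1..p}" "j \<in> {1..q}"
  shows "g i j = unit_cross g i j + unit_cross (transpose_gens g) j i"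
proof -
  have o: "other j \<in> {1..q}" "other i \<in> {1..p}" using dims by auto
  have "g i j = g i (other j) * g (other i) (other j) * g (other i) j
      + g (other i) j * g (other i) (other j) * g i (other j)"
    using triple[OF assms(1) o(2) o(2) o(1) o(1) assms(2)] by simp
  also have "\<dots> = unit_cross g i j + unit_cross (transpose_gens g) j i"
    using gen_chain_eq_unit_cross[of i "other i" "other j" j]
      gen_chain_eq_unit_cross_transpose[of i "other i" "other j" j] assms o by simp
  finally show ?thesis .
qed

lemma gen_square_eq_unit_diag_add:
  assumes "i \<in> {1..p}" "j \<in> {1..q}"
  shows "g i j * g i j = unit_diag g i + unit_diag (transpose_gens g) j"
proof -
  have "g i j * g i j = unit_cross g i j * g i j + unit_cross (transpose_gens g) j i * g i j"
    by (subst (1) gen_eq_unit_cross_add[OF assms]) (simp add: distrib_right)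
  then show ?thesis
    using unit_cross_mult_gen_self[OF assms]
      triple_gens.unit_cross_mult_gen_self[OF triple_gens_transpose assms(2,1)] by simp
qed

lemma unit_off_mult_gen:
  assumes "a \<in> {1..p}" "b \<in> {1..p}" "i \<in> {1..p}" "j \<in> {1..q}" "a \<noteq> b"
  shows "unit_off g a b * g i j = (if b = i then unit_cross g a j else 0)"
proof (cases "b = i")
  case True
  then show ?thesis
    unfolding unit_off_def using gen_chain_eq_unit_cross[OF assms(1,2), of 1 j] assms dims by auto
next
  case False
  have o: "other j \<in> {1..q}" using dims by auto
  have "unit_off g a b * g i j = g a (other j) * (g b (other j) * g i j)"
    by (simp flip: gen_mult_gen_eq_unit_off[OF assms(1,2) o assms(5)] add: mult.assoc)
  also have "g b (other j) * g i j = 0"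
    using gen_mult_gen_eq_0 assms o False by simp
  finally show ?thesis using False by simp
qed

lemma unit_diag_mult_gen:
  assumes "a \<in> {1..p}" "i \<in> {1..p}" "j \<in> {1..q}"
  shows "unit_diag g a * g i j = (if a = i then unit_cross g a j else 0)"
proof (cases "a = i")
  case True
  have o: "other j \<in> {1..q}" using dims by auto
  have "unit_cross g a j = g a (other j) * g a (other j) * g a j"
    by (rule gen_chain_eq_unit_cross[symmetric]) (use assms o in auto)
  then have "unit_cross g a j * g a j * g a j = g a (other j) * g a (other j) * (g a j * g a j * g a j)"
    by (simp add: mult.assoc)
  also have "\<dots> = unit_cross g a j"
    using gen_cube[OF assms(1,3)] \<open>unit_cross g a j = _\<close> by simp
  finally show ?thesis
    using True unit_cross_mult_gen_self[OF assms(1,3)] by simp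
next
  case False
  have o: "other a \<in> {1..p}" using dims by auto
  have "unit_diag g a * g i j = unit_off g a (other a) * (unit_off g (other a) a * g i j)"
    by (simp add: unit_diag_def mult.assoc)
  then show ?thesis using unit_off_mult_gen[OF o assms] False by simp
qed

lemma unit_cross_mult_gen:
  assumes "a \<in> {1..p}" "d \<in> {1..q}" "i \<in> {1..p}" "j \<in> {1..q}"
  shows "unit_cross g a d * g i j = (if d = j then (if a = i then unit_diag g a else unit_off g a i) else 0)"
proof -
  consider "d \<noteq> j" | "d = j" "a = i" | "d = j" "a \<noteq> i" by blast
  then show ?thesis
  proof cases
    case 1
    have o: "other d \<in> {1..q}" "other i \<in> {1..p}" using dims by auto
    have "unit_cross g a d = g a (other d) * g (other i) (other d) * g (other i) d"
      by (rule gen_chain_eq_unit_cross[symmetric]) (use assms o in auto)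
    moreover have "g (other i) d * g i j = 0"
      using gen_mult_gen_eq_0 assms o 1 by simp
    ultimately show ?thesis using 1 by (simp add: mult.assoc)
  next
    case 2
    then show ?thesis using unit_cross_mult_gen_self[OF assms(1,2)] by simp
  next
    case 3
    have "unit_cross g a d = g a j * g i j * g i j"
      using gen_chain_eq_unit_cross[of a i j j] assms 3 by simp
    then have "unit_cross g a d * g i j = g a j * (g i j * g i j * g i j)"
      by (simp add: mult.assoc)
    then show ?thesis
      using 3 gen_cube[OF assms(3,4)] gen_mult_gen_eq_unit_off[OF assms(1,3,4)] by simp
  qed
qed

end

section \<open>Matrix units\<close>

text \<open>The units with an index in \<open>\<Omega>\<^sub>3\<close> are those of the transposed generators.\<close>
definition munit :: "(nat \<Rightarrow> nat \<Rightarrow> 'r::ring) \<Rightarrow> nat \<Rightarrow> nat \<Rightarrow> nat \<Rightarrow> 'r" where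
  "munit g p a b =
    (if a \<le> p then
       (if b \<le> p then (if a = b then unit_diag g a else unit_off g a b) else unit_cross g a (b - p))
     else
       (if b \<le> p then unit_cross (transpose_gens g) (a - p) b
        else if a = b then unit_diag (transpose_gens g) (a - p)
        else unit_off (transpose_gens g) (a - p) (b - p)))"

text \<open>Exchanging the blocks \<open>\<Omega>\<^sub>1\<close> and \<open>\<Omega>\<^sub>3\<close> turns the units of \<open>g\<close> into those of the
  transposed generators, so the lower block is reduced to the upper one.\<close>
definition block_swap :: "nat \<Rightarrow> nat \<Rightarrow> nat \<Rightarrow> nat" where
  "block_swap p q a = (if a \<le> p then a + q else a - p)"

lemma block_swap_in_range: "a \<in> {1..p+q} \<Longrightarrow> block_swap p q a \<in> {1..q+p}"
  by (auto simp: block_swap_def)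

lemma block_swap_eq_iff:
  "a \<in> {1..p+q} \<Longrightarrow> b \<in> {1..p+q} \<Longrightarrow> block_swap p q a = block_swap p q b \<longleftrightarrow> a = b"
  by (auto simp: block_swap_def)

lemma munit_block_swap:
  "a \<in> {1..p+q} \<Longrightarrow> b \<in> {1..p+q} \<Longrightarrow>
    munit g p a b = munit (transpose_gens g) q (block_swap p q a) (block_swap p q b)"
  by (auto simp: munit_def block_swap_def)

context triple_gens
begin

lemma munit_mult_gen_upper:
  assumes "a \<in> {1..p}" "b \<in> {1..p+q}" "i \<in> {1..p}" "j \<in> {1..q}"
  shows "munit g p a b * g i j
    = (if b = i then munit g p a (j + p) else 0) + (if b = j + p then munit g p a i else 0)"
proof -
  consider "b \<le> p" "a = b" | "b \<le> p" "a \<noteq> b" | "p < b" by linarith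
  then show ?thesis
  proof cases
    case 1
    then show ?thesis using assms unit_diag_mult_gen[of a i j] by (auto simp: munit_def)
  next
    case 2
    then show ?thesis using assms unit_off_mult_gen[of a b i j] by (auto simp: munit_def)
  next
    case 3
    moreover have "b - p \<in> {1..q}" "b - p = j \<longleftrightarrow> b = j + p" using 3 assms by auto
    ultimately show ?thesis
      using assms unit_cross_mult_gen[of a "b - p" i j] by (auto simp: munit_def)
  qed
qed

lemma munit_mult_gen:
  assumes "a \<in> {1..p+q}" "b \<in> {1..p+q}" "i \<in> {1..p}" "j \<in> {1..q}"
  shows "munit g p a b * g i j
    = (if b = i then munit g p a (j + p) else 0) + (if b = j + p then munit g p a i else 0)"
proof (cases "a \<le> p")
  case True
  then show ?thesis using munit_mult_gen_upper assms by simp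
next
  case False
  let ?h = "transpose_gens g" and ?s = "block_swap p q"
  have s: "?s a = a - p" "?s i = i + q" "?s (j + p) = j"
    "?s b = j \<longleftrightarrow> b = j + p" "?s b = i + q \<longleftrightarrow> b = i"
    using assms False by (auto simp: block_swap_def)
  have "munit g p a b * g i j = munit ?h q (a - p) (?s b) * ?h j i"
    using munit_block_swap[of a p q b g] assms s by simp
  also have "\<dots> = (if ?s b = j then munit ?h q (a - p) (i + q) else 0)
      + (if ?s b = i + q then munit ?h q (a - p) j else 0)"
    by (rule triple_gens.munit_mult_gen_upper[OF triple_gens_transpose])
      (use assms False block_swap_in_range in auto)
  also have "munit ?h q (a - p) (i + q) = munit g p a i"
    using munit_block_swap[of a p q i g] assms s by simp
  also have "munit ?h q (a - p) j = munit g p a (j + p)"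
    using munit_block_swap[of a p q "j + p" g] assms s by simp
  finally show ?thesis using s by simp
qed

text \<open>Every unit with first index in the first block is a product of generators, so the
  multiplication table follows by repeated use of \<open>munit_mult_gen\<close>.\<close>
lemma munit_mult_munit_upper:
  assumes "a \<in> {1..p+q}" "b \<in> {1..p+q}" "c \<in> {1..p}" "d \<in> {1..p+q}"
  shows "munit g p a b * munit g p c d = (if b = c then munit g p a d else 0)"
proof -
  have if_mult: "\<And>P x y. (if P then x else 0) * (y::'r) = (if P then x * y else 0)" by simp
  have o: "other c \<in> {1..p}" "other c \<noteq> Suc p"
    using dims by (auto simp: other_def)
  note unfold_products = munit_mult_gen mult.assoc[symmetric] distrib_right if_mult
  consider "d \<le> p" "c = d" | "d \<le> p" "c \<noteq> d" | "p < d" by linarith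
  then show ?thesis
  proof cases
    case 1
    then have "munit g p c d = g c 1 * g (other c) 1 * g (other c) 1 * g c 1"
      by (simp add: munit_def unit_diag_def unit_off_def mult.assoc)
    then show ?thesis using assms dims o 1 by (simp add: unfold_products)
  next
    case 2
    then have "munit g p c d = g c 1 * g d 1"
      using assms by (simp add: munit_def unit_off_def)
    then show ?thesis using assms dims 2 by (simp add: unfold_products)
  next
    case 3
    then have "munit g p c d = g c 1 * g (other c) 1 * g (other c) (d - p)"
      using assms by (simp add: munit_def unit_cross_def)
    moreover have "d - p \<in> {1..q}" "d - p + p = d" "other c \<noteq> d"
      using 3 assms dims by (auto simp: other_def)
    ultimately show ?thesis using assms dims o 3 by (simp add: unfold_products)
  qed
qed

lemma munit_mult_munit:
  assumes "a \<in> {1..p+q}" "b \<in> {1..p+q}" "c \<in> {1..p+q}" "d \<in> {1..p+q}"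
  shows "munit g p a b * munit g p c d = (if b = c then munit g p a d else 0)"
proof (cases "c \<le> p")
  case True
  then show ?thesis using munit_mult_munit_upper assms by simp
next
  case False
  let ?h = "transpose_gens g" and ?s = "block_swap p q"
  have "munit g p a b * munit g p c d = munit ?h q (?s a) (?s b) * munit ?h q (?s c) (?s d)"
    using munit_block_swap[of _ p q _ g] assms by simp
  also have "\<dots> = (if ?s b = ?s c then munit ?h q (?s a) (?s d) else 0)"
    by (rule triple_gens.munit_mult_munit_upper[OF triple_gens_transpose])
      (use assms False block_swap_in_range in \<open>auto simp: block_swap_def\<close>)
  finally show ?thesis
    using munit_block_swap[of a p q d g] block_swap_eq_iff[of b p q c] assms by simp
qed

end

definition A13_ring :: "(nat \<Rightarrow> nat \<Rightarrow> 'r::ring) \<Rightarrow> nat \<Rightarrow> nat \<Rightarrow> nat \<Rightarrow> nat \<Rightarrow> 'r" where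
  "A13_ring g p j0 i k =
    (if i = 1 \<and> k = p + 1 then g 1 j0 * g 1 j0 * g 1 1 else g i 1 * g 1 1 * g 1 (k - p))"

definition Aelt_ring ::
    "(nat \<Rightarrow> nat \<Rightarrow> 'r::ring) \<Rightarrow> nat \<Rightarrow> nat \<Rightarrow> nat \<Rightarrow> nat \<Rightarrow> nat \<Rightarrow> nat \<Rightarrow> 'r" where
  "Aelt_ring g p q j0 t0 i k =
    (if i \<in> Om1 p \<and> k \<in> Om1 p then
       (if i \<noteq> k then g i 1 * g k 1
        else if i = 1 then g 1 1 * g 1 1 * g 1 j0 * g 1 j0
        else - (g 1 1 * g 1 1 * g t0 1 * g t0 1) + g i 1 * g i 1)
     else if i \<in> Om1 p \<and> k \<in> Om3 p q then A13_ring g p j0 i k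
     else if i \<in> Om3 p q \<and> k \<in> Om1 p then - A13_ring g p j0 k i + g k (i - p)
     else if i \<in> Om3 p q \<and> k \<in> Om3 p q then
       (if i \<noteq> k then g 1 (i - p) * g 1 (k - p)
        else - (g 1 1 * g 1 1 * g 1 j0 * g 1 j0) + g 1 (i - p) * g 1 (i - p))
     else 0)"

lemma Aelt_ring_add_swap:
  "i \<in> Om1 p \<Longrightarrow> j \<in> Om2 q \<Longrightarrow>
    Aelt_ring g p q j0 t0 i (j + p) + Aelt_ring g p q j0 t0 (j + p) i = g i j"
  by (auto simp: Aelt_ring_def Om1_def Om2_def Om3_def)

context triple_gens
begin

lemma A13_ring_eq_unit_cross:
  assumes "i \<in> {1..p}" "k \<in> {p+1..p+q}" "j0 \<in> {2..q}"
  shows "A13_ring g p j0 i k = unit_cross g i (k - p)"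
proof -
  have "k - p \<in> {1..q}" "k - p = 1 \<longleftrightarrow> k = p + 1" using assms by auto
  then show ?thesis
    using gen_chain_eq_unit_cross[of 1 1 j0 1] gen_chain_eq_unit_cross[of i 1 1 "k - p"] assms dims
    by (auto simp: A13_ring_def)
qed

lemma unit_diag_1_eq:
  assumes "m \<in> {2..q}"
  shows "unit_diag g 1 = g 1 1 * g 1 1 * g 1 m * g 1 m"
  using gen_chain_eq_unit_cross[of 1 1 1 m] unit_cross_mult_gen_self[of 1 m] assms dims by auto

lemma Aelt_ring_eq_munit:
  assumes "i \<in> {1..p+q}" "k \<in> {1..p+q}" "j0 \<in> {2..q}" "t0 \<in> {2..p}"
  shows "Aelt_ring g p q j0 t0 i k = munit g p i k"
proof -
  have Om: "Om1 p = {1..p}" "Om3 p q = {p+1..p+q}" by (simp_all add: Om1_def Om3_def)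
  note unfold = Aelt_ring_def munit_def Om
  have diag1: "unit_diag g 1 = g 1 1 * g 1 1 * g 1 j0 * g 1 j0"
    using unit_diag_1_eq[OF assms(3)] .
  have diag1T: "unit_diag (transpose_gens g) 1 = g 1 1 * g 1 1 * g t0 1 * g t0 1"
    using triple_gens.unit_diag_1_eq[OF triple_gens_transpose assms(4)] by simp
  consider "i \<le> p" "k \<le> p" | "i \<le> p" "p < k" | "p < i" "k \<le> p" | "p < i" "p < k"
    by linarith
  then show ?thesis
  proof cases
    case 1
    have "i \<noteq> 1 \<Longrightarrow> g i 1 * g i 1 = unit_diag g i + unit_diag (transpose_gens g) 1"
      using gen_square_eq_unit_diag_add[of i 1] 1 assms dims by auto
    then show ?thesis
      using 1 assms diag1 diag1T by (auto simp: unfold unit_off_def)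
  next
    case 2
    then show ?thesis using A13_ring_eq_unit_cross[of i k j0] assms by (auto simp: unfold)
  next
    case 3
    then have "i - p \<in> {1..q}" using assms by auto
    then have "g k (i - p) = unit_cross g k (i - p) + unit_cross (transpose_gens g) (i - p) k"
      using gen_eq_unit_cross_add[of k "i - p"] 3 assms by auto
    with 3 show ?thesis
      using A13_ring_eq_unit_cross[of k i j0] assms by (auto simp: unfold)
  next
    case 4
    then have "i - p \<in> {1..q}" using assms by auto
    then have "g 1 (i - p) * g 1 (i - p) = unit_diag g 1 + unit_diag (transpose_gens g) (i - p)"
      using gen_square_eq_unit_diag_add[of 1 "i - p"] dims by auto
    with 4 show ?thesis using assms diag1 by (auto simp: unfold unit_off_def)
  qed
qed

end

section \<open>The free algebra and the envelope\<close>

lemma fa_mult_add_left: "fa_mult (fa_add f g) h = fa_add (fa_mult f h) (fa_mult g h)"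
  by (auto simp: fa_mult_def fa_add_def distrib_right sum.distrib)

lemma fa_mult_add_right: "fa_mult h (fa_add f g) = fa_add (fa_mult h f) (fa_mult h g)"
  by (auto simp: fa_mult_def fa_add_def distrib_left sum.distrib)

lemma fa_mult_sub_left: "fa_mult (fa_sub f g) h = fa_sub (fa_mult f h) (fa_mult g h)"
  by (auto simp: fa_mult_def fa_sub_def left_diff_distrib sum_subtractf)

lemma fa_mult_sub_right: "fa_mult h (fa_sub f g) = fa_sub (fa_mult h f) (fa_mult h g)"
  by (auto simp: fa_mult_def fa_sub_def right_diff_distrib sum_subtractf)

lemma fa_mult_zero_left: "fa_mult fa_zero h = fa_zero"
  by (simp add: fa_mult_def fa_zero_def)

lemma fa_smult_indicator: "fa_smult (if P then 1 else 0) f = (if P then f else fa_zero)"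
  by (auto simp: fa_smult_def fa_zero_def)

lemma fa_mult_assoc: "fa_mult (fa_mult f g) h = fa_mult f (fa_mult g h)"
proof
  fix w :: "(nat \<times> nat) list"
  define n where "n = length w"
  define F where "F = (\<lambda>m r. f (take m w) * g (take r (drop m w)) * h (drop (m + r) w))"
  have "fa_mult (fa_mult f g) h w = (\<Sum>k\<le>n. \<Sum>m\<le>k. F m (k - m))"
    unfolding fa_mult_def F_def n_def atLeast0AtMost
    by (auto simp: sum_distrib_right min_def take_drop intro!: sum.cong)
  also have "\<dots> = (\<Sum>(m, r)\<in>{(i, j). i + j \<le> n}. F m r)"
    by (rule sum.triangle_reindex_eq[symmetric])
  also have "{(i, j). i + j \<le> n} = Sigma {..n} (\<lambda>m. {..n - m})" by auto
  also have "(\<Sum>(m, r)\<in>Sigma {..n} (\<lambda>m. {..n - m}). F m r) = (\<Sum>m\<le>n. \<Sum>r\<le>n - m. F m r)"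
    by (rule sum.Sigma[symmetric]) auto
  also have "\<dots> = fa_mult f (fa_mult g h) w"
    unfolding fa_mult_def F_def n_def atLeast0AtMost
    by (auto simp: sum_distrib_left mult.assoc add.commute intro!: sum.cong)
  finally show "fa_mult (fa_mult f g) h w = fa_mult f (fa_mult g h) w" .
qed

lemma FA_zero: "fa_zero \<in> FA p q"
  by (auto simp: FA_def fa_zero_def)

lemma FA_add:
  assumes "f \<in> FA p q" "g \<in> FA p q"
  shows "fa_add f g \<in> FA p q"
proof -
  have "{w. fa_add f g w \<noteq> 0} \<subseteq> {w. f w \<noteq> 0} \<union> {w. g w \<noteq> 0}"
    by (auto simp: fa_add_def)
  with assms show ?thesis by (auto simp: FA_def fa_add_def intro: finite_subset)
qed

lemma FA_smult: "f \<in> FA p q \<Longrightarrow> fa_smult c f \<in> FA p q"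
  unfolding FA_def fa_smult_def by (auto elim!: finite_subset[rotated])

lemma FA_neg: "f \<in> FA p q \<Longrightarrow> fa_neg f \<in> FA p q"
  using FA_smult[of f p q "-1"] by (simp add: fa_neg_def fa_smult_def)

lemma fa_mult_neq_0_split:
  "fa_mult f g w \<noteq> 0 \<Longrightarrow> \<exists>k. f (take k w) \<noteq> 0 \<and> g (drop k w) \<noteq> 0"
  by (rule ccontr) (auto simp: fa_mult_def intro!: sum.neutral)

lemma FA_mult:
  assumes f: "f \<in> FA p q" and g: "g \<in> FA p q"
  shows "fa_mult f g \<in> FA p q"
proof -
  let ?S = "\<lambda>h. {w. h w \<noteq> 0}"
  have "?S (fa_mult f g) \<subseteq> (\<lambda>(u, v). u @ v) ` (?S f \<times> ?S g)"
  proof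
    fix w assume "w \<in> ?S (fa_mult f g)"
    then obtain k where "f (take k w) \<noteq> 0" "g (drop k w) \<noteq> 0"
      using fa_mult_neq_0_split[of f g w] by blast
    then show "w \<in> (\<lambda>(u, v). u @ v) ` (?S f \<times> ?S g)"
      by (intro image_eqI[of _ _ "(take k w, drop k w)"]) auto
  qed
  moreover have "finite ((\<lambda>(u, v). u @ v) ` (?S f \<times> ?S g))"
    using f g by (auto simp: FA_def)
  ultimately have "finite (?S (fa_mult f g))" by (rule finite_subset)
  moreover have "fa_mult f g [] = 0" using f by (simp add: fa_mult_def FA_def)
  moreover have "set w \<subseteq> Om1 p \<times> Om2 q" if nz: "fa_mult f g w \<noteq> 0" for w
  proof -
    obtain k where "f (take k w) \<noteq> 0" "g (drop k w) \<noteq> 0"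
      using fa_mult_neq_0_split[OF nz] by blast
    then have "set (take k w @ drop k w) \<subseteq> Om1 p \<times> Om2 q"
      using f g unfolding FA_def set_append by blast
    then show ?thesis by simp
  qed
  ultimately show ?thesis by (auto simp: FA_def)
qed

lemma FA_Gen: "i \<in> Om1 p \<Longrightarrow> j \<in> Om2 q \<Longrightarrow> Gen i j \<in> FA p q"
  by (auto simp: FA_def Gen_def finite_subset[of _ "{[(i, j)]}"])

lemma ueq_refl: "ueq p q x x"
  using Ideal.zero by (simp add: ueq_def fa_sub_def fa_zero_def)

lemma ueq_sym: "ueq p q x y \<Longrightarrow> ueq p q y x"
  using Ideal.smult[of "fa_sub x y" p q "-1"] by (simp add: ueq_def fa_sub_def fa_smult_def)

lemma ueq_trans: "ueq p q x y \<Longrightarrow> ueq p q y z \<Longrightarrow> ueq p q x z"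
  using Ideal.add[of "fa_sub x y" p q "fa_sub y z"] by (simp add: ueq_def fa_sub_def fa_add_def)

lemma ueq_add: "ueq p q x x' \<Longrightarrow> ueq p q y y' \<Longrightarrow> ueq p q (fa_add x y) (fa_add x' y')"
  using Ideal.add[of "fa_sub x x'" p q "fa_sub y y'"]
  by (simp add: ueq_def fa_sub_def fa_add_def algebra_simps)

lemma ueq_neg: "ueq p q x x' \<Longrightarrow> ueq p q (fa_neg x) (fa_neg x')"
  using Ideal.smult[of "fa_sub x x'" p q "-1"] by (simp add: ueq_def fa_sub_def fa_neg_def fa_smult_def)

lemma ueq_mult:
  assumes "ueq p q x x'" "ueq p q y y'" "x' \<in> FA p q" "y \<in> FA p q"
  shows "ueq p q (fa_mult x y) (fa_mult x' y')"
proof -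
  have "fa_sub (fa_mult x y) (fa_mult x' y')
      = fa_add (fa_mult (fa_sub x x') y) (fa_mult x' (fa_sub y y'))"
    by (simp only: fa_mult_sub_left fa_mult_sub_right) (auto simp: fa_sub_def fa_add_def)
  then show ?thesis using assms by (simp add: ueq_def Ideal.add Ideal.lmult Ideal.rmult)
qed

lemma ueq_zero_if_double: "ueq p q (fa_add x x) fa_zero \<Longrightarrow> ueq p q (x :: 'a::field_char_0 fa) fa_zero"
  using Ideal.smult[of "fa_sub (fa_add x x) fa_zero" p q "1/2"]
  by (simp add: ueq_def fa_sub_def fa_add_def fa_smult_def fa_zero_def)

lemma Emat_triple:
  "Emat i j a c * Emat k l d c * Emat s t d b =
    (if c = j then (if d = k then
       (if a = i \<and> b = t \<and> j = l \<and> k = s then 1 else 0) else 0) else (0::'a::field))"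
  by (simp add: Emat_def)

lemma sum_if_eq: "finite S \<Longrightarrow> x \<in> S \<Longrightarrow> (\<Sum>d\<in>S. if d = x then f else 0) = f"
  by (simp add: sum.delta)

lemma sum_if_const: "(\<Sum>d\<in>S. if P then f d else 0) = (if P then (\<Sum>d\<in>S. f d) else 0)"
  by simp

lemma finite_Om1: "finite (Om1 p)" and finite_Om2: "finite (Om2 q)"
  by (auto simp: Om1_def Om2_def)

lemma jtp_Emat:
  assumes "k \<in> Om1 p" "j \<in> Om2 q" "t \<in> Om2 q"
  shows "jtp p q (Emat i j) (Emat k l) (Emat s t) a b =
    (if a = i \<and> b = t \<and> j = l \<and> k = s then 1 else 0)
      + (if a = s \<and> b = j \<and> t = l \<and> k = i then 1 else (0::'a::field))"
proof -
  have "jtp p q (Emat i j) (Emat k l) (Emat s t) a b =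
     (\<Sum>c\<in>Om2 q. \<Sum>d\<in>Om1 p. (if c = j then (if d = k then
        (if a = i \<and> b = t \<and> j = l \<and> k = s then (1::'a) else 0) else 0) else 0))
   + (\<Sum>c\<in>Om2 q. \<Sum>d\<in>Om1 p. (if c = t then (if d = k then
        (if a = s \<and> b = j \<and> t = l \<and> k = i then (1::'a) else 0) else 0) else 0))"
    unfolding jtp_def Emat_triple by (simp only: sum.distrib)
  also have "\<dots> = (if a = i \<and> b = t \<and> j = l \<and> k = s then 1 else 0)
      + (if a = s \<and> b = j \<and> t = l \<and> k = i then 1 else 0)"
    by (simp only: sum_if_const sum_if_eq[OF finite_Om1 assms(1)]
        sum_if_eq[OF finite_Om2 assms(2)] sum_if_eq[OF finite_Om2 assms(3)])
  finally show ?thesis .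
qed

lemma Phi_jtp_Emat:
  assumes "i \<in> Om1 p" "k \<in> Om1 p" "s \<in> Om1 p" "j \<in> Om2 q" "t \<in> Om2 q"
  shows "Phi p q (jtp p q (Emat i j) (Emat k l) (Emat s t)) =
    fa_add (if j = l \<and> k = s then Gen i t else fa_zero)
      (if t = l \<and> k = i then Gen s j else (fa_zero :: 'a::field fa))"
proof (rule ext)
  fix w
  have summand: "\<And>a b. jtp p q (Emat i j) (Emat k l) (Emat s t) a b * Gen a b w =
     (if a = i then (if b = t then (if j = l \<and> k = s then Gen i t w else 0) else 0) else 0)
   + (if a = s then (if b = j then (if t = l \<and> k = i then Gen s j w else 0) else 0) else (0::'a))"
    unfolding jtp_Emat[OF assms(2,4,5)] by (simp add: distrib_right)
  have "Phi p q (jtp p q (Emat i j) (Emat k l) (Emat s t)) w =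
     (\<Sum>a\<in>Om1 p. \<Sum>b\<in>Om2 q.
       (if a = i then (if b = t then (if j = l \<and> k = s then Gen i t w else 0) else 0) else 0))
   + (\<Sum>a\<in>Om1 p. \<Sum>b\<in>Om2 q.
       (if a = s then (if b = j then (if t = l \<and> k = i then Gen s j w else 0) else 0) else (0::'a)))"
    unfolding Phi_def summand sum.distrib ..
  also have "\<dots> = (if j = l \<and> k = s then Gen i t w else 0) + (if t = l \<and> k = i then Gen s j w else 0)"
    by (simp only: sum_if_const sum_if_eq[OF finite_Om1 assms(1)] sum_if_eq[OF finite_Om1 assms(3)]
       sum_if_eq[OF finite_Om2 assms(4)] sum_if_eq[OF finite_Om2 assms(5)])
  finally show "Phi p q (jtp p q (Emat i j) (Emat k l) (Emat s t)) w =
      fa_add (if j = l \<and> k = s then Gen i t else fa_zero)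
        (if t = l \<and> k = i then Gen s j else (fa_zero :: 'a fa)) w"
    by (simp only: fa_add_def fa_zero_def if_distribR)
qed

lemma ueq_triple_relation:
  assumes "i \<in> Om1 p" "k \<in> Om1 p" "s \<in> Om1 p" "j \<in> Om2 q" "l \<in> Om2 q" "t \<in> Om2 q"
  shows "ueq p q
    (fa_add (m3 (Gen i j) (Gen k l) (Gen s t)) (m3 (Gen s t) (Gen k l) (Gen i j)))
    (fa_add (if j = l \<and> k = s then Gen i t else fa_zero)
      (if t = l \<and> k = i then Gen s j else (fa_zero :: 'a::field fa)))"
  using Ideal.gen[OF assms] unfolding ueq_def rel_def Phi_jtp_Emat[OF assms(1-4,6)] .

definition fam_FA :: "(nat \<times> nat \<Rightarrow> ('a::field) fa) \<Rightarrow> bool" where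
  "fam_FA F \<longleftrightarrow> (\<forall>p q. F (p, q) \<in> FA p q)"

definition fam_ueq :: "(nat \<times> nat \<Rightarrow> ('a::field) fa) \<Rightarrow> (nat \<times> nat \<Rightarrow> 'a fa) \<Rightarrow> bool" where
  "fam_ueq F G \<longleftrightarrow> fam_FA F \<and> fam_FA G \<and> (\<forall>p q. ueq p q (F (p, q)) (G (p, q)))"

lemma part_equivp_fam_ueq: "part_equivp (fam_ueq :: (nat \<times> nat \<Rightarrow> ('a::field) fa) \<Rightarrow> _)"
proof (rule part_equivpI)
  show "\<exists>F :: nat \<times> nat \<Rightarrow> 'a fa. fam_ueq F F"
    by (rule exI[of _ "\<lambda>_. fa_zero"]) (auto simp: fam_ueq_def fam_FA_def FA_zero ueq_refl)
  show "symp (fam_ueq :: (nat \<times> nat \<Rightarrow> 'a fa) \<Rightarrow> _)"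
    by (auto simp: symp_def fam_ueq_def intro: ueq_sym)
  show "transp (fam_ueq :: (nat \<times> nat \<Rightarrow> 'a fa) \<Rightarrow> _)"
    unfolding transp_def fam_ueq_def by (meson ueq_trans)
qed

text \<open>A type cannot depend on \<open>p\<close> and \<open>q\<close>, so the quotients \<open>\<F>/I\<close> for all shapes
  \<open>(p, q)\<close> are the components of a single ring of families.\<close>
quotient_type (overloaded) 'a envelopes = "nat \<times> nat \<Rightarrow> ('a::field) fa" / partial: fam_ueq
  by (rule part_equivp_fam_ueq)

lemma fam_ueq_eqI: "fam_FA F \<Longrightarrow> F = G \<Longrightarrow> fam_ueq F G"
  by (auto simp: fam_ueq_def ueq_refl)

lemma fam_ueq_refl_iff: "fam_ueq F F \<longleftrightarrow> fam_FA F"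
  by (simp add: fam_ueq_def ueq_refl)

lemma fam_FA_zero: "fam_FA (\<lambda>_. fa_zero)"
  by (simp add: fam_FA_def FA_zero)

lemma fam_FA_add: "fam_FA F \<Longrightarrow> fam_FA G \<Longrightarrow> fam_FA (\<lambda>pq. fa_add (F pq) (G pq))"
  by (simp add: fam_FA_def FA_add)

lemma fam_FA_neg: "fam_FA F \<Longrightarrow> fam_FA (\<lambda>pq. fa_neg (F pq))"
  by (simp add: fam_FA_def FA_neg)

lemma fam_FA_mult: "fam_FA F \<Longrightarrow> fam_FA G \<Longrightarrow> fam_FA (\<lambda>pq. fa_mult (F pq) (G pq))"
  by (simp add: fam_FA_def FA_mult)

lemma fam_ring_laws:
  fixes a b c :: "nat \<times> nat \<Rightarrow> ('a::field) fa"
  assumes "fam_FA a" "fam_FA b" "fam_FA c"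
  shows "fam_ueq (\<lambda>pq. fa_add (fa_add (a pq) (b pq)) (c pq)) (\<lambda>pq. fa_add (a pq) (fa_add (b pq) (c pq)))"
    and "fam_ueq (\<lambda>pq. fa_add (a pq) (b pq)) (\<lambda>pq. fa_add (b pq) (a pq))"
    and "fam_ueq (\<lambda>pq. fa_add fa_zero (a pq)) a"
    and "fam_ueq (\<lambda>pq. fa_add (fa_neg (a pq)) (a pq)) (\<lambda>pq. fa_zero)"
    and "fam_ueq (\<lambda>pq. fa_add (a pq) (fa_neg (b pq))) (\<lambda>pq. fa_add (a pq) (fa_neg (b pq)))"
    and "fam_ueq (\<lambda>pq. fa_mult (fa_mult (a pq) (b pq)) (c pq)) (\<lambda>pq. fa_mult (a pq) (fa_mult (b pq) (c pq)))"
    and "fam_ueq (\<lambda>pq. fa_mult (fa_add (a pq) (b pq)) (c pq))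
      (\<lambda>pq. fa_add (fa_mult (a pq) (c pq)) (fa_mult (b pq) (c pq)))"
    and "fam_ueq (\<lambda>pq. fa_mult (a pq) (fa_add (b pq) (c pq)))
      (\<lambda>pq. fa_add (fa_mult (a pq) (b pq)) (fa_mult (a pq) (c pq)))"
  by (rule fam_ueq_eqI; (intro fam_FA_zero fam_FA_add fam_FA_neg fam_FA_mult assms)?;
      (simp only: fa_mult_assoc fa_mult_add_left fa_mult_add_right)?;
      (simp add: fun_eq_iff fa_add_def fa_neg_def fa_zero_def add_ac)?)+

instantiation envelopes :: (field) ring
begin

lift_definition zero_envelopes :: "'a envelopes" is "\<lambda>_. fa_zero"
  by (auto simp: fam_ueq_def fam_FA_def FA_zero ueq_refl)

lift_definition plus_envelopes :: "'a envelopes \<Rightarrow> 'a envelopes \<Rightarrow> 'a envelopes"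
  is "\<lambda>F G pq. fa_add (F pq) (G pq)"
  unfolding fam_ueq_def fam_FA_def by (auto simp: FA_add intro!: ueq_add)

lift_definition uminus_envelopes :: "'a envelopes \<Rightarrow> 'a envelopes" is "\<lambda>F pq. fa_neg (F pq)"
  unfolding fam_ueq_def fam_FA_def by (auto simp: FA_neg intro!: ueq_neg)

lift_definition minus_envelopes :: "'a envelopes \<Rightarrow> 'a envelopes \<Rightarrow> 'a envelopes"
  is "\<lambda>F G pq. fa_add (F pq) (fa_neg (G pq))"
  unfolding fam_ueq_def fam_FA_def by (auto simp: FA_add FA_neg intro!: ueq_add ueq_neg)

lift_definition times_envelopes :: "'a envelopes \<Rightarrow> 'a envelopes \<Rightarrow> 'a envelopes"
  is "\<lambda>F G pq. fa_mult (F pq) (G pq)"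
  unfolding fam_ueq_def fam_FA_def by (auto simp: FA_mult intro!: ueq_mult)

instance
  by standard (transfer, rule fam_ring_laws; simp add: fam_ueq_refl_iff)+

end

text \<open>The family concentrated at the shape \<open>(p, q)\<close>; elements outside \<open>FA p q\<close> are sent
  to \<open>0\<close>.\<close>
definition fam_at :: "nat \<Rightarrow> nat \<Rightarrow> ('a::field) fa \<Rightarrow> nat \<times> nat \<Rightarrow> 'a fa" where
  "fam_at p q f = (\<lambda>pq. if pq = (p, q) \<and> f \<in> FA p q then f else fa_zero)"

lemma fam_FA_fam_at: "fam_FA (fam_at p q f)"
  by (auto simp: fam_FA_def fam_at_def FA_zero)

lift_definition env_of :: "nat \<Rightarrow> nat \<Rightarrow> ('a::field) fa \<Rightarrow> 'a envelopes" is fam_at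
  by (simp add: fam_ueq_refl_iff fam_FA_fam_at)

lemma fam_ueq_fam_at_iff:
  assumes "f \<in> FA p q" "g \<in> FA p q"
  shows "fam_ueq (fam_at p q f) (fam_at p q g) \<longleftrightarrow> ueq p q f g"
proof
  assume "fam_ueq (fam_at p q f) (fam_at p q g)"
  then have "ueq p q (fam_at p q f (p, q)) (fam_at p q g (p, q))" by (simp add: fam_ueq_def)
  with assms show "ueq p q f g" by (simp add: fam_at_def)
next
  assume "ueq p q f g"
  then have "ueq p' q' (fam_at p q f (p', q')) (fam_at p q g (p', q'))" for p' q'
    using assms by (simp add: fam_at_def ueq_refl)
  then show "fam_ueq (fam_at p q f) (fam_at p q g)" by (simp add: fam_ueq_def fam_FA_fam_at)
qed

lemma env_of_eq_iff:
  "f \<in> FA p q \<Longrightarrow> g \<in> FA p q \<Longrightarrow> env_of p q f = env_of p q g \<longleftrightarrow> ueq p q f g"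
  by transfer (rule fam_ueq_fam_at_iff)

lemma env_of_zero: "env_of p q fa_zero = 0"
  by transfer (rule fam_ueq_eqI[OF fam_FA_fam_at], auto simp: fam_at_def)

lemma env_of_add:
  "f \<in> FA p q \<Longrightarrow> g \<in> FA p q \<Longrightarrow> env_of p q (fa_add f g) = env_of p q f + env_of p q g"
  by transfer (rule fam_ueq_eqI[OF fam_FA_fam_at], rule ext,
      auto simp: fam_at_def FA_add; simp add: fa_add_def fa_zero_def)

lemma env_of_neg: "f \<in> FA p q \<Longrightarrow> env_of p q (fa_neg f) = - env_of p q f"
  by transfer (rule fam_ueq_eqI[OF fam_FA_fam_at], rule ext,
      auto simp: fam_at_def FA_neg; simp add: fa_neg_def fa_zero_def)

lemma env_of_mult:
  "f \<in> FA p q \<Longrightarrow> g \<in> FA p q \<Longrightarrow> env_of p q (fa_mult f g) = env_of p q f * env_of p q g"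
  by transfer (rule fam_ueq_eqI[OF fam_FA_fam_at], rule ext,
      auto simp: fam_at_def FA_mult fa_mult_zero_left)

lemma fam_ueq_zero_if_double:
  assumes "fam_FA x" "fam_ueq (\<lambda>pq. fa_add (x pq) (x pq)) (\<lambda>_. fa_zero)"
  shows "fam_ueq x (\<lambda>_. fa_zero :: ('a::field_char_0) fa)"
  using assms unfolding fam_ueq_def by (auto intro: ueq_zero_if_double)

lemma envelopes_two_torsion_free: "(x :: ('a::field_char_0) envelopes) + x = 0 \<Longrightarrow> x = 0"
  by transfer (simp add: fam_ueq_refl_iff fam_ueq_zero_if_double)

section \<open>Transfer to \<open>\<U>(\<J>)\<close>\<close>

lemma Om1_iff: "i \<in> Om1 p \<longleftrightarrow> i \<in> {1..p}"
  and Om2_iff: "j \<in> Om2 q \<longleftrightarrow> j \<in> {1..q}"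
  by (simp_all add: Om1_def Om2_def)

lemma Om1_Un_Om3: "Om1 p \<union> Om3 p q = {1..p+q}"
  by (auto simp: Om1_def Om3_def)

lemma env_of_if_zero: "env_of p q (if P then f else fa_zero) = (if P then env_of p q f else 0)"
  by (simp add: env_of_zero)

lemma triple_gens_env_of:
  assumes "1 < p" "1 < q"
  shows "triple_gens p q (\<lambda>i j. env_of p q (Gen i j) :: ('a::field_char_0) envelopes)"
proof
  show "2 \<le> p" "2 \<le> q" using assms by auto
  show "x + x = 0 \<Longrightarrow> x = 0" for x :: "'a envelopes" by (rule envelopes_two_torsion_free)
  fix i j k l s t
  assume "i \<in> {1..p}" "k \<in> {1..p}" "s \<in> {1..p}" "j \<in> {1..q}" "l \<in> {1..q}" "t \<in> {1..q}"
  then have idx: "i \<in> Om1 p" "k \<in> Om1 p" "s \<in> Om1 p" "j \<in> Om2 q" "l \<in> Om2 q" "t \<in> Om2 q"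
    by (simp_all add: Om1_iff Om2_iff)
  note FA_closed = FA_add FA_mult FA_Gen FA_zero
  have "env_of p q (Gen i j) * env_of p q (Gen k l) * env_of p q (Gen s t)
      + env_of p q (Gen s t) * env_of p q (Gen k l) * env_of p q (Gen i j)
    = env_of p q (fa_add (m3 (Gen i j) (Gen k l) (Gen s t)) (m3 (Gen s t) (Gen k l) (Gen i j)))"
    using idx by (simp add: env_of_add env_of_mult FA_closed)
  also have "\<dots> = env_of p q (fa_add (if j = l \<and> k = s then Gen i t else fa_zero)
      (if t = l \<and> k = i then Gen s j else fa_zero))"
    using ueq_triple_relation[OF idx] idx by (simp add: env_of_eq_iff FA_closed)
  also have "\<dots> = (if j = l \<and> k = s then env_of p q (Gen i t) else 0)
      + (if t = l \<and> k = i then env_of p q (Gen s j) else 0)"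
    using idx by (simp add: env_of_add env_of_if_zero FA_closed)
  finally show "env_of p q (Gen i j) * env_of p q (Gen k l) * env_of p q (Gen s t)
      + env_of p q (Gen s t) * env_of p q (Gen k l) * env_of p q (Gen i j)
    = (if j = l \<and> k = s then env_of p q (Gen i t) else 0)
      + (if t = l \<and> k = i then env_of p q (Gen s j) else 0)" .
qed

lemma Om3_diff: "k \<in> Om3 p q \<Longrightarrow> k - p \<in> Om2 q"
  by (auto simp: Om2_def Om3_def)

lemma Aelt_in_FA:
  assumes "j0 \<in> Om2 q" "t0 \<in> Om1 p" "1 \<in> Om1 p" "1 \<in> Om2 q"
  shows "Aelt p q j0 t0 i k \<in> FA p q"
  unfolding Aelt_def A13_def using assms
  by (simp add: FA_add FA_neg FA_mult FA_Gen FA_zero Om3_diff)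

lemma env_of_Aelt:
  assumes "j0 \<in> Om2 q" "t0 \<in> Om1 p" "1 \<in> Om1 p" "1 \<in> Om2 q"
  shows "env_of p q (Aelt p q j0 t0 i k) = Aelt_ring (\<lambda>i j. env_of p q (Gen i j)) p q j0 t0 i k"
  unfolding Aelt_def Aelt_ring_def A13_def A13_ring_def using assms
  by (simp add: env_of_add env_of_neg env_of_mult env_of_zero FA_add FA_neg FA_mult FA_Gen Om3_diff)

lemma Aelt_in_FA_of_choices:
  assumes "1 < p" "1 < q" "j0 \<in> Om2 q - {1}" "t0 \<in> Om1 p - {1}"
  shows "Aelt p q j0 t0 i k \<in> FA p q"
  using assms by (intro Aelt_in_FA) (auto simp: Om1_def Om2_def)

lemma env_of_Aelt_eq_munit:
  assumes "1 < p" "1 < q" "j0 \<in> Om2 q - {1}" "t0 \<in> Om1 p - {1}"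
    and "i \<in> Om1 p \<union> Om3 p q" "k \<in> Om1 p \<union> Om3 p q"
  shows "env_of p q (Aelt p q j0 t0 i k :: ('a::field_char_0) fa)
    = munit (\<lambda>i j. env_of p q (Gen i j)) p i k"
proof -
  interpret triple_gens p q "\<lambda>i j. env_of p q (Gen i j) :: 'a envelopes"
    using triple_gens_env_of assms(1,2) .
  have "1 \<in> Om1 p" "1 \<in> Om2 q" "j0 \<in> {2..q}" "t0 \<in> {2..p}"
    "i \<in> {1..p+q}" "k \<in> {1..p+q}"
    using assms by (auto simp: Om1_def Om2_def Om3_def)
  then show ?thesis
    using env_of_Aelt[of j0 q t0 p, where 'a = 'a] Aelt_ring_eq_munit[of i k j0 t0] assms(3,4) by simp
qed

lemma ueq_Aelt_choice_independent:
  assumes "1 < p" "1 < q" "j0 \<in> Om2 q - {1}" "t0 \<in> Om1 p - {1}"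
    and "j0' \<in> Om2 q - {1}" "t0' \<in> Om1 p - {1}"
    and "i \<in> Om1 p \<union> Om3 p q" "k \<in> Om1 p \<union> Om3 p q"
  shows "ueq p q (Aelt p q j0 t0 i k :: ('a::field_char_0) fa) (Aelt p q j0' t0' i k)"
proof -
  have "env_of p q (Aelt p q j0 t0 i k :: 'a fa) = env_of p q (Aelt p q j0' t0' i k)"
    using env_of_Aelt_eq_munit[OF assms(1-4,7,8), where 'a = 'a]
      env_of_Aelt_eq_munit[OF assms(1,2,5-8), where 'a = 'a] by simp
  then show ?thesis
    by (simp add: env_of_eq_iff[OF Aelt_in_FA_of_choices[OF assms(1-4)]
          Aelt_in_FA_of_choices[OF assms(1,2,5,6)]])
qed

lemma ueq_Aelt_mult:
  assumes "1 < p" "1 < q" "j0 \<in> Om2 q - {1}" "t0 \<in> Om1 p - {1}"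
    and "i \<in> Om1 p \<union> Om3 p q" "k \<in> Om1 p \<union> Om3 p q"
    and "l \<in> Om1 p \<union> Om3 p q" "t \<in> Om1 p \<union> Om3 p q"
  shows "ueq p q (fa_mult (Aelt p q j0 t0 i k) (Aelt p q j0 t0 l t) :: ('a::field_char_0) fa)
    (fa_smult (if k = l then 1 else 0) (Aelt p q j0 t0 i t))"
proof -
  interpret triple_gens p q "\<lambda>i j. env_of p q (Gen i j) :: 'a envelopes"
    using triple_gens_env_of assms(1,2) .
  note A_FA = Aelt_in_FA_of_choices[OF assms(1-4)]
  have "env_of p q (fa_mult (Aelt p q j0 t0 i k) (Aelt p q j0 t0 l t) :: 'a fa)
      = munit (\<lambda>i j. env_of p q (Gen i j)) p i k * munit (\<lambda>i j. env_of p q (Gen i j)) p l t"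
    using assms by (simp add: env_of_mult A_FA env_of_Aelt_eq_munit)
  also have "\<dots> = (if k = l then munit (\<lambda>i j. env_of p q (Gen i j)) p i t else 0)"
    using munit_mult_munit assms by (simp add: Om1_Un_Om3)
  also have "\<dots> = env_of p q (fa_smult (if k = l then 1 else 0) (Aelt p q j0 t0 i t))"
    using assms by (simp add: fa_smult_indicator env_of_if_zero env_of_Aelt_eq_munit)
  finally show ?thesis
    by (simp add: env_of_eq_iff A_FA FA_mult FA_smult)
qed

lemma ueq_Gen_Aelt_add:
  assumes "j0 \<in> Om2 q" "t0 \<in> Om1 p" "i \<in> Om1 p" "j \<in> Om2 q"
  shows "ueq p q (Gen i j :: ('a::field) fa) (fa_add (Aelt p q j0 t0 i (j + p)) (Aelt p q j0 t0 (j + p) i))"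
proof -
  have one: "1 \<in> Om1 p" "1 \<in> Om2 q" using assms by (auto simp: Om1_def Om2_def)
  note A_FA = Aelt_in_FA[OF assms(1,2) one]
  have "env_of p q (Gen i j)
      = env_of p q (fa_add (Aelt p q j0 t0 i (j + p)) (Aelt p q j0 t0 (j + p) i) :: 'a fa)"
    using Aelt_ring_add_swap[OF assms(3,4), where g = "\<lambda>i j. env_of p q (Gen i j :: 'a fa)"]
    by (simp add: env_of_add A_FA env_of_Aelt[OF assms(1,2) one])
  then show ?thesis
    by (simp add: env_of_eq_iff A_FA FA_add FA_Gen assms)
qed

theorem mainTheorem3:
  fixes p q :: nat
  assumes "1 < p" and "1 < q" and "p \<noteq> q"
  shows "(\<forall>j0\<in>Om2 q - {1}. \<forall>t0\<in>Om1 p - {1}. \<forall>j0'\<in>Om2 q - {1}. \<forall>t0'\<in>Om1 p - {1}.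
            \<forall>i\<in>Om1 p \<union> Om3 p q. \<forall>k\<in>Om1 p \<union> Om3 p q.
              ueq p q (Aelt p q j0 t0 i k :: 'a::field_char_0 fa) (Aelt p q j0' t0' i k))
       \<and> (\<forall>j0\<in>Om2 q - {1}. \<forall>t0\<in>Om1 p - {1}.
            \<forall>i\<in>Om1 p \<union> Om3 p q. \<forall>k\<in>Om1 p \<union> Om3 p q.
            \<forall>l\<in>Om1 p \<union> Om3 p q. \<forall>t\<in>Om1 p \<union> Om3 p q.
              ueq p q (fa_mult (Aelt p q j0 t0 i k) (Aelt p q j0 t0 l t) :: 'a fa)
                      (fa_smult (if k = l then 1 else 0) (Aelt p q j0 t0 i t)))
       \<and> (\<forall>j0\<in>Om2 q - {1}. \<forall>t0\<in>Om1 p - {1}. \<forall>i\<in>Om1 p. \<forall>j\<in>Om2 q.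
              ueq p q (Gen i j :: 'a fa)
                      (fa_add (Aelt p q j0 t0 i (j + p)) (Aelt p q j0 t0 (j + p) i)))"
  by (intro conjI ballI ueq_Aelt_choice_independent ueq_Aelt_mult ueq_Gen_Aelt_add assms(1,2);
      blast)

end
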